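(* Let $G$ and $H$ be graphs. If $G\in\operatorname{obs}^\ast(H)$, then there is a vertex $v\in V(G)$ such that $G-v\cong H$.
   Context: All graphs are finite, simple and loopless. A full-homomorphism $\varphi\colon G\to H$ is a map $V(G)\to V(H)$ such that for all $x,y\in V(G)$, $xy\in E(G)$ if and only if $\varphi(x)\varphi(y)\in E(H)$. A full $H$-colouring of $G$ is a full-homomorphism $G\to H$. A minimal $H$-obstruction is a graph $G$ that admits no full $H$-colouring while every proper induced subgraph of $G$ admits one; $\operatorname{obs}(H)$ denotes the set of minimal $H$-obstructions (up to isomorphism), and $\operatorname{obs}^\ast(H)$ the set of minimal $H$-obstructions on exactly $|V(H)|+1$ vertices. *)

theory Defs
  imports Main
begin

type_synonym 'a graph = "'a set \<times> ('a \<times> 'a) set"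

definition verts :: "'a graph \<Rightarrow> 'a set" where "verts G = fst G"
definition edges :: "'a graph \<Rightarrow> ('a \<times> 'a) set" where "edges G = snd G"

definition is_graph :: "'a graph \<Rightarrow> bool" where
  "is_graph G \<longleftrightarrow> finite (verts G) \<and> edges G \<subseteq> verts G \<times> verts G
     \<and> sym (edges G) \<and> irrefl (edges G)"

definition full_hom :: "'a graph \<Rightarrow> 'b graph \<Rightarrow> ('a \<Rightarrow> 'b) \<Rightarrow> bool" where
  "full_hom G H f \<longleftrightarrow> f ` verts G \<subseteq> verts H \<and>
     (\<forall>x\<in>verts G. \<forall>y\<in>verts G. (x, y) \<in> edges G \<longleftrightarrow> (f x, f y) \<in> edges H)"

definition full_colourable :: "'a graph \<Rightarrow> 'b graph \<Rightarrow> bool" where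
  "full_colourable G H \<longleftrightarrow> (\<exists>f. full_hom G H f)"

definition induced :: "'a graph \<Rightarrow> 'a set \<Rightarrow> 'a graph" where
  "induced G S = (S, edges G \<inter> (S \<times> S))"

definition delete_vertex :: "'a graph \<Rightarrow> 'a \<Rightarrow> 'a graph" where
  "delete_vertex G v = induced G (verts G - {v})"

definition minimal_obstruction :: "'b graph \<Rightarrow> 'a graph \<Rightarrow> bool" where
  "minimal_obstruction H G \<longleftrightarrow> is_graph G \<and> \<not> full_colourable G H \<and>
     (\<forall>S. S \<subset> verts G \<longrightarrow> full_colourable (induced G S) H)"

definition obs_star :: "'b graph \<Rightarrow> 'a graph \<Rightarrow> bool" where
  "obs_star H G \<longleftrightarrow> minimal_obstruction H G \<and> card (verts G) = card (verts H) + 1"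

definition graph_iso :: "'a graph \<Rightarrow> 'b graph \<Rightarrow> bool" where
  "graph_iso G H \<longleftrightarrow> (\<exists>f. bij_betw f (verts G) (verts H) \<and>
     (\<forall>x\<in>verts G. \<forall>y\<in>verts G. (x, y) \<in> edges G \<longleftrightarrow> (f x, f y) \<in> edges H))"

end

theory Submission
  imports Defs
begin

text \<open>If \<open>G - v\<close> is not isomorphic to \<open>H\<close>, the full \<open>H\<close>-colouring of \<open>G - v\<close> given by
minimality cannot be injective, because \<open>|V(G - v)| = |V(H)|\<close>. Two vertices of the same colour
have the same neighbours in \<open>G - v\<close>, and they are not twins in \<open>G\<close> (a twin could take its
partner's colour and colour all of \<open>G\<close>), so their neighbourhoods differ exactly in \<open>v\<close>.
If this happens for every \<open>v\<close>, then over GF(2) every unit vector is the sum of two rows of the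
adjacency matrix, so every vector of \<open>GF(2)^V\<close> is a sum of an even number of rows. But there
are only \<open>2^(|V|-1)\<close> even sets of rows.\<close>

lemma card_sym_diff_add:
  assumes "finite A" "finite B"
  shows "card (sym_diff A B) + 2 * card (A \<inter> B) = card A + card B"
proof -
  have "card (A \<union> B) = card (sym_diff A B) + card (A \<inter> B)"
    by (subst card_Un_disjoint[symmetric]) (use assms in \<open>auto intro: arg_cong[where f = card]\<close>)
  then show ?thesis using card_Un_Int[OF assms] by simp
qed

lemma odd_card_sym_diff:
  "finite A \<Longrightarrow> finite B \<Longrightarrow> odd (card (sym_diff A B)) \<longleftrightarrow> (odd (card A) \<noteq> odd (card B))"
  using card_sym_diff_add[of A B] by (metis even_add even_mult_iff even_numeral)

lemma card_even_subsets_less: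
  assumes "finite S" "S \<noteq> {}"
  shows "card {T. T \<subseteq> S \<and> even (card T)} < 2 ^ card S"
proof -
  let ?ev = "{T. T \<subseteq> S \<and> even (card T)}" and ?od = "{T. T \<subseteq> S \<and> odd (card T)}"
  have "card ?ev = card ?od"
    using card_subsupersets_even_odd[of S "{}"] assms by auto
  moreover have "card ?ev + card ?od = 2 ^ card S"
  proof -
    have "Pow S = ?ev \<union> ?od" by auto
    then have "card (Pow S) = card ?ev + card ?od"
      using assms(1) by (metis (no_types, lifting) card_Un_disjoint disjoint_iff finite_Pow_iff
          finite_Un mem_Collect_eq)
    then show ?thesis using assms(1) by (simp add: card_Pow)
  qed
  moreover have "0 < card ?od"
  proof -
    obtain s where "s \<in> S" using assms(2) by blast
    then have "{s} \<in> ?od" by auto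
    then show ?thesis using assms(1) by (auto simp: card_gt_0_iff)
  qed
  ultimately show ?thesis by linarith
qed

text \<open>The GF(2)-sum of the rows indexed by \<open>A\<close> of the adjacency matrix of \<open>E\<close> on \<open>V\<close>,
as a subset of \<open>V\<close>.\<close>
definition odd_nbrs :: "('a \<times> 'a) set \<Rightarrow> 'a set \<Rightarrow> 'a set \<Rightarrow> 'a set" where
  "odd_nbrs E V A = {z \<in> V. odd (card {x \<in> A. (x, z) \<in> E})}"

lemma odd_nbrs_sym_diff:
  assumes "finite A" "finite B"
  shows "odd_nbrs E V (sym_diff A B) = sym_diff (odd_nbrs E V A) (odd_nbrs E V B)"
proof -
  have "{x \<in> sym_diff A B. (x, z) \<in> E}
      = sym_diff {x \<in> A. (x, z) \<in> E} {x \<in> B. (x, z) \<in> E}" for z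
    by blast
  then have "odd (card {x \<in> sym_diff A B. (x, z) \<in> E})
      \<longleftrightarrow> (odd (card {x \<in> A. (x, z) \<in> E}) \<noteq> odd (card {x \<in> B. (x, z) \<in> E}))" for z
    using odd_card_sym_diff[of "{x \<in> A. (x, z) \<in> E}" "{x \<in> B. (x, z) \<in> E}"] assms by simp
  then show ?thesis
    unfolding odd_nbrs_def by blast
qed

definition separated_only_by :: "('a \<times> 'a) set \<Rightarrow> 'a set \<Rightarrow> 'a \<Rightarrow> 'a \<Rightarrow> 'a \<Rightarrow> bool" where
  "separated_only_by E V v x y \<longleftrightarrow> (\<forall>z\<in>V. ((x, z) \<in> E \<longleftrightarrow> (y, z) \<in> E) \<longleftrightarrow> z \<noteq> v)"

lemma odd_nbrs_separated_pair:
  assumes "separated_only_by E V v x y" "v \<in> V"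
  shows "x \<noteq> y" "odd_nbrs E V {x, y} = {v}"
proof -
  show "x \<noteq> y" using assms unfolding separated_only_by_def by blast
  have "card {u \<in> {x, y}. (u, z) \<in> E} = (if (x, z) \<in> E then 1 else 0) + (if (y, z) \<in> E then 1 else 0)" for z
  proof -
    have "{u \<in> {x, y}. (u, z) \<in> E} = (if (x, z) \<in> E then {x} else {}) \<union> (if (y, z) \<in> E then {y} else {})"
      by auto
    then show ?thesis using \<open>x \<noteq> y\<close> by auto
  qed
  then show "odd_nbrs E V {x, y} = {v}"
    using assms unfolding separated_only_by_def odd_nbrs_def by auto
qed

lemma odd_nbrs_onto_if_all_separated:
  assumes "finite V" "\<forall>v\<in>V. \<exists>x\<in>V. \<exists>y\<in>V. separated_only_by E V v x y" "W \<subseteq> V"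
  shows "\<exists>A\<subseteq>V. even (card A) \<and> odd_nbrs E V A = W"
  using finite_subset[OF assms(3,1)] assms(3)
proof (induction W rule: finite_subset_induct)
  case empty
  show ?case by (rule exI[of _ "{}"]) (auto simp: odd_nbrs_def)
next
  case (insert v W)
  then obtain A where A: "A \<subseteq> V" "even (card A)" "odd_nbrs E V A = W" by blast
  obtain x y where xy: "x \<in> V" "y \<in> V" "separated_only_by E V v x y"
    using assms(2) insert.hyps(2) by blast
  note pair = odd_nbrs_separated_pair[OF xy(3) insert.hyps(2)]
  have "finite A" using A(1) assms(1) finite_subset by blast
  then have "sym_diff A {x, y} \<subseteq> V \<and> even (card (sym_diff A {x, y}))
      \<and> odd_nbrs E V (sym_diff A {x, y}) = insert v W"
    using A xy pair insert.hyps odd_card_sym_diff[of A "{x, y}"] odd_nbrs_sym_diff[of A "{x, y}"]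
    by auto
  then show ?case by blast
qed

lemma not_all_separated:
  assumes "finite V" "V \<noteq> {}"
  shows "\<not> (\<forall>v\<in>V. \<exists>x\<in>V. \<exists>y\<in>V. separated_only_by E V v x y)"
proof
  assume "\<forall>v\<in>V. \<exists>x\<in>V. \<exists>y\<in>V. separated_only_by E V v x y"
  then have "Pow V \<subseteq> odd_nbrs E V ` {A. A \<subseteq> V \<and> even (card A)}"
    using odd_nbrs_onto_if_all_separated[OF assms(1)] by blast
  then have "card (Pow V) \<le> card {A. A \<subseteq> V \<and> even (card A)}"
    by (rule surj_card_le[rotated]) (use assms(1) in auto)
  then show False
    using card_even_subsets_less[OF assms] assms(1) by (simp add: card_Pow)
qed

lemma verts_delete_vertex [simp]: "verts (delete_vertex G v) = verts G - {v}"
  unfolding delete_vertex_def induced_def verts_def by simp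

lemma full_hom_delete_vertex_iff:
  "full_hom (delete_vertex G v) H f \<longleftrightarrow> f ` (verts G - {v}) \<subseteq> verts H \<and>
     (\<forall>x\<in>verts G - {v}. \<forall>y\<in>verts G - {v}. (x, y) \<in> edges G \<longleftrightarrow> (f x, f y) \<in> edges H)"
  unfolding full_hom_def delete_vertex_def induced_def verts_def edges_def by auto

lemma minimal_obstruction_colourable_delete_vertex:
  assumes "minimal_obstruction H G" "v \<in> verts G"
  obtains f where "full_hom (delete_vertex G v) H f"
proof -
  have "verts G - {v} \<subset> verts G" using assms(2) by auto
  then show ?thesis
    using assms(1) that
    unfolding minimal_obstruction_def full_colourable_def delete_vertex_def by blast
qed

lemma full_hom_extend_twin:
  assumes "is_graph G" "is_graph H" "full_hom (delete_vertex G x) H f"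
    and "y \<in> verts G" "y \<noteq> x"
    and twins: "\<forall>z\<in>verts G. (x, z) \<in> edges G \<longleftrightarrow> (y, z) \<in> edges G"
  shows "full_hom G H (f(x := f y))"
proof -
  have symG: "sym (edges G)" and irr: "irrefl (edges G)" "irrefl (edges H)"
    using assms(1,2) unfolding is_graph_def by auto
  have hom: "f ` (verts G - {x}) \<subseteq> verts H"
    "\<And>a b. a \<in> verts G - {x} \<Longrightarrow> b \<in> verts G - {x} \<Longrightarrow> (a, b) \<in> edges G \<longleftrightarrow> (f a, f b) \<in> edges H"
    using assms(3) unfolding full_hom_delete_vertex_iff by auto
  let ?r = "\<lambda>a. if a = x then y else a"
  have retract: "(a, b) \<in> edges G \<longleftrightarrow> (?r a, ?r b) \<in> edges G"
    if "a \<in> verts G" "b \<in> verts G" "a = x \<longrightarrow> b \<noteq> x" for a b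
    using that twins symG by (auto dest: symD)
  show ?thesis
    unfolding full_hom_def
  proof (intro conjI ballI)
    show "(f(x := f y)) ` verts G \<subseteq> verts H" using hom(1) assms(4,5) by auto
  next
    fix a b assume ab: "a \<in> verts G" "b \<in> verts G"
    show "(a, b) \<in> edges G \<longleftrightarrow> ((f(x := f y)) a, (f(x := f y)) b) \<in> edges H"
    proof (cases "a = x \<and> b = x")
      case True
      then show ?thesis using irr unfolding irrefl_def by simp
    next
      case False
      then show ?thesis
        using retract[OF ab] hom(2)[of "?r a" "?r b"] ab assms(4,5) by auto
    qed
  qed
qed

lemma minimal_obstruction_no_twins:
  assumes "is_graph G" "is_graph H" "minimal_obstruction H G"
    and "x \<in> verts G" "y \<in> verts G" "x \<noteq> y"
  shows "\<exists>z\<in>verts G. \<not> ((x, z) \<in> edges G \<longleftrightarrow> (y, z) \<in> edges G)"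
proof (rule ccontr)
  assume "\<not> ?thesis"
  then have twins: "\<forall>z\<in>verts G. (x, z) \<in> edges G \<longleftrightarrow> (y, z) \<in> edges G" by blast
  obtain f where "full_hom (delete_vertex G x) H f"
    using minimal_obstruction_colourable_delete_vertex[OF assms(3,4)] .
  then have "full_hom G H (f(x := f y))"
    using full_hom_extend_twin[OF assms(1,2) _ assms(5)] assms(6) twins by blast
  then show False
    using assms(3) unfolding minimal_obstruction_def full_colourable_def by blast
qed

lemma full_hom_inj_imp_graph_iso:
  assumes "full_hom G H f" "inj_on f (verts G)"
    and "finite (verts H)" "card (verts G) = card (verts H)"
  shows "graph_iso G H"
proof -
  have "f ` verts G \<subseteq> verts H" using assms(1) unfolding full_hom_def by blast
  moreover have "card (f ` verts G) = card (verts H)"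
    using card_image[OF assms(2)] assms(4) by simp
  ultimately have "f ` verts G = verts H"
    using card_subset_eq[OF assms(3)] by blast
  then show ?thesis
    using assms(1,2) unfolding graph_iso_def full_hom_def bij_betw_def by blast
qed

lemma separated_pair_if_not_iso:
  assumes "is_graph G" "is_graph H" "obs_star H G"
    and "v \<in> verts G" "\<not> graph_iso (delete_vertex G v) H"
  shows "\<exists>x\<in>verts G. \<exists>y\<in>verts G. separated_only_by (edges G) (verts G) v x y"
proof -
  have mo: "minimal_obstruction H G" and card: "card (verts G) = card (verts H) + 1"
    using assms(3) unfolding obs_star_def by auto
  obtain f where f: "full_hom (delete_vertex G v) H f"
    using minimal_obstruction_colourable_delete_vertex[OF mo assms(4)] .
  have "finite (verts G)" "finite (verts H)"
    using assms(1,2) unfolding is_graph_def by auto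
  then have "card (verts (delete_vertex G v)) = card (verts H)"
    using card assms(4) by simp
  then have "\<not> inj_on f (verts G - {v})"
    using full_hom_inj_imp_graph_iso[OF f] assms(5) \<open>finite (verts H)\<close> by auto
  then obtain x y where xy: "x \<in> verts G - {v}" "y \<in> verts G - {v}" "x \<noteq> y" "f x = f y"
    unfolding inj_on_def by blast
  have agree: "(x, z) \<in> edges G \<longleftrightarrow> (y, z) \<in> edges G" if "z \<in> verts G - {v}" for z
  proof -
    have "\<forall>a\<in>verts G - {v}. \<forall>b\<in>verts G - {v}. (a, b) \<in> edges G \<longleftrightarrow> (f a, f b) \<in> edges H"
      using f unfolding full_hom_delete_vertex_iff by blast
    then show ?thesis using xy that by (simp add: \<open>f x = f y\<close>)
  qed
  then have "separated_only_by (edges G) (verts G) v x y"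
    using minimal_obstruction_no_twins[OF assms(1,2) mo, of x y] xy
    unfolding separated_only_by_def by blast
  then show ?thesis using xy by blast
qed

theorem mainTheorem9:
  fixes G :: "'a graph" and H :: "'b graph"
  assumes "is_graph G" and "is_graph H"
    and "obs_star H G"
  shows "\<exists>v\<in>verts G. graph_iso (delete_vertex G v) H"
proof (rule ccontr)
  assume "\<not> ?thesis"
  then have "\<forall>v\<in>verts G. \<exists>x\<in>verts G. \<exists>y\<in>verts G. separated_only_by (edges G) (verts G) v x y"
    using separated_pair_if_not_iso[OF assms] by blast
  moreover have "finite (verts G)" "verts G \<noteq> {}"
    using assms(1,3) unfolding is_graph_def obs_star_def by auto
  ultimately show False using not_all_separated by blast
qed

end
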